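(* Let $(A_\gamma)_{\gamma\in\Gamma}$ be a nonempty family of nontrivial commutative groups, let $S_\gamma\subseteq A_\gamma$ generate $A_\gamma$, let $A=\bigoplus_\gamma A_\gamma$ (each $A_\gamma$ viewed as a subgroup of $A$), and let $B$ be a commutative group. For $f\in B^A$ and $d\in\mathbb N$, the following are equivalent: (i) there exist $r\in\mathbb N$, indices $\gamma_1,\dots,\gamma_r\in\Gamma$, positive integers $d_1,\dots,d_r$ with $d_1+\dots+d_r=d$, and elements $a_{i,j}\in S_{\gamma_i}$ ($1\le i\le r$, $1\le j\le d_i$) such that $\big(\prod_{i=1}^r\prod_{j=1}^{d_i}\Delta_{a_{i,j}}\big)f\ne0$; (ii) $\operatorname{fdeg}(f)\ge d$.
   Context: For commutative groups $A,B$, $B^A$ denotes the commutative group (under pointwise addition) of all maps $A\to B$. For $a\in A$, the difference operator $\Delta_a:B^A\to B^A$ is $(\Delta_a f)(x)=f(x+a)-f(x)$; the empty product of such operators is the identity. Let $\widetilde{\mathbb N}=\mathbb N\cup\{-\infty,\infty\}$ ($\mathbb N=\{0,1,2,\dots\}$), totally ordered with $-\infty$ least and $\infty$ greatest. The functional degree $\operatorname{fdeg}(f)\in\widetilde{\mathbb N}$ of $f\in B^A$ is: $-\infty$ if $f=0$; otherwise the least $n\in\mathbb N$ such that $\Delta_{a_1}\cdots\Delta_{a_{n+1}}f=0$ for all $a_1,\dots,a_{n+1}\in A$; and $\infty$ if no such $n$ exists. *)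

theory Defs
  imports "HOL-Algebra.Algebra" "HOL-Library.Extended_Real"
begin

text \<open>Maps A -> B are HOL functions; only their values on carrier A matter.
  Groups (written multiplicatively in HOL-Algebra) play the role of the
  commutative groups of the paper.\<close>

definition delta :: "('a,'c) monoid_scheme \<Rightarrow> ('b,'d) monoid_scheme \<Rightarrow> 'a \<Rightarrow> ('a \<Rightarrow> 'b) \<Rightarrow> ('a \<Rightarrow> 'b)"
  where "delta A B a f = (\<lambda>x. f (x \<otimes>\<^bsub>A\<^esub> a) \<otimes>\<^bsub>B\<^esub> inv\<^bsub>B\<^esub> (f x))"

definition deltas :: "('a,'c) monoid_scheme \<Rightarrow> ('b,'d) monoid_scheme \<Rightarrow> 'a list \<Rightarrow> ('a \<Rightarrow> 'b) \<Rightarrow> ('a \<Rightarrow> 'b)"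
  where "deltas A B as f = foldr (delta A B) as f"

definition is_zero_map :: "('a,'c) monoid_scheme \<Rightarrow> ('b,'d) monoid_scheme \<Rightarrow> ('a \<Rightarrow> 'b) \<Rightarrow> bool"
  where "is_zero_map A B f \<longleftrightarrow> (\<forall>x\<in>carrier A. f x = \<one>\<^bsub>B\<^esub>)"

definition fdeg :: "('a,'c) monoid_scheme \<Rightarrow> ('b,'d) monoid_scheme \<Rightarrow> ('a \<Rightarrow> 'b) \<Rightarrow> ereal"
  where "fdeg A B f =
    (if is_zero_map A B f then -\<infinity>
     else if (\<exists>n::nat. \<forall>as. set as \<subseteq> carrier A \<and> length as = Suc n \<longrightarrow> is_zero_map A B (deltas A B as f))
     then ereal (real (LEAST n::nat. \<forall>as. set as \<subseteq> carrier A \<and> length as = Suc n \<longrightarrow> is_zero_map A B (deltas A B as f)))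
     else \<infinity>)"

definition sum_inj :: "'i set \<Rightarrow> ('i \<Rightarrow> ('a,'c) monoid_scheme) \<Rightarrow> 'i \<Rightarrow> 'a \<Rightarrow> ('i \<Rightarrow> 'a)"
  where "sum_inj I G k a = (\<lambda>i\<in>I. if i = k then a else \<one>\<^bsub>G i\<^esub>)"

end

theory Submission
  imports Defs
begin

text \<open>The periods of a map form a subgroup, so a map whose differences along all elements of a
  generating set vanish has all its differences vanishing; as difference operators commute,
  each of the \<open>d\<close> factors can thus be replaced, one at a time, by a difference along a generator.
  The images of the \<open>S\<^sub>\<gamma>\<close> generate the direct sum, and a list of such generators is a
  product as in (i) with blocks of length one.\<close>

lemma delta_funcset:
  assumes "group A" "group B" "h \<in> carrier A \<rightarrow> carrier B" "a \<in> carrier A"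
  shows "delta A B a h \<in> carrier A \<rightarrow> carrier B"
  using assms by (auto simp: delta_def Pi_def group.is_monoid monoid.m_closed group.inv_closed)

lemma deltas_funcset:
  assumes "group A" "group B" "h \<in> carrier A \<rightarrow> carrier B" "set as \<subseteq> carrier A"
  shows "deltas A B as h \<in> carrier A \<rightarrow> carrier B"
  using assms(4) by (induction as) (auto simp: deltas_def assms delta_funcset)

lemma deltas_Nil [simp]: "deltas A B [] h = h"
  by (simp add: deltas_def)

lemma deltas_Cons: "deltas A B (a # as) h = delta A B a (deltas A B as h)"
  by (simp add: deltas_def)

lemma deltas_append: "deltas A B (as @ bs) h = deltas A B as (deltas A B bs h)"
  by (simp add: deltas_def)

lemma is_zero_map_cong:
  "(\<And>x. x \<in> carrier A \<Longrightarrow> h x = h' x) \<Longrightarrow> is_zero_map A B h \<longleftrightarrow> is_zero_map A B h'"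
  by (simp add: is_zero_map_def)

lemma is_zero_map_deltas:
  assumes "group A" "group B" "is_zero_map A B h" "set as \<subseteq> carrier A"
  shows "is_zero_map A B (deltas A B as h)"
  using assms(4)
proof (induction as)
  case (Cons a as)
  then show ?case
    using assms
    by (auto simp: deltas_Cons delta_def is_zero_map_def group.is_monoid monoid.m_closed monoid.inv_one)
qed (use assms in simp)

lemma delta_cong:
  assumes "group A" "\<And>x. x \<in> carrier A \<Longrightarrow> h x = h' x" "a \<in> carrier A" "x \<in> carrier A"
  shows "delta A B a h x = delta A B a h' x"
  using assms by (simp add: delta_def group.is_monoid monoid.m_closed)

lemma delta_commute:
  assumes "comm_group A" "comm_group B" "h \<in> carrier A \<rightarrow> carrier B"
    and "a \<in> carrier A" "b \<in> carrier A" "x \<in> carrier A"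
  shows "delta A B a (delta A B b h) x = delta A B b (delta A B a h) x"
proof -
  interpret A: comm_group A by fact
  interpret B: comm_group B by fact
  have swap: "x \<otimes>\<^bsub>A\<^esub> a \<otimes>\<^bsub>A\<^esub> b = x \<otimes>\<^bsub>A\<^esub> b \<otimes>\<^bsub>A\<^esub> a"
    using assms by (simp add: A.m_ac)
  have "h (x \<otimes>\<^bsub>A\<^esub> b \<otimes>\<^bsub>A\<^esub> a) \<in> carrier B" "h (x \<otimes>\<^bsub>A\<^esub> a) \<in> carrier B"
    "h (x \<otimes>\<^bsub>A\<^esub> b) \<in> carrier B" "h x \<in> carrier B"
    using assms by auto
  then show ?thesis
    unfolding delta_def swap by (simp add: B.inv_mult_group B.m_ac)
qed

lemma deltas_delta_commute:
  assumes "comm_group A" "comm_group B" "h \<in> carrier A \<rightarrow> carrier B"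
    and "a \<in> carrier A" "set as \<subseteq> carrier A" "x \<in> carrier A"
  shows "deltas A B as (delta A B a h) x = delta A B a (deltas A B as h) x"
  using assms(5,6)
proof (induction as arbitrary: x)
  case (Cons b as)
  have groups: "group A" "group B"
    using assms(1,2) by (simp_all add: comm_group.axioms(2))
  have "deltas A B (b # as) (delta A B a h) x = delta A B b (delta A B a (deltas A B as h)) x"
    unfolding deltas_Cons using Cons by (intro delta_cong groups) auto
  also have "\<dots> = delta A B a (deltas A B (b # as) h) x"
    unfolding deltas_Cons using Cons assms by (intro delta_commute deltas_funcset groups) auto
  finally show ?case .
qed simp

definition periods :: "('a,'c) monoid_scheme \<Rightarrow> ('a \<Rightarrow> 'b) \<Rightarrow> 'a set"
  where "periods A h = {a \<in> carrier A. \<forall>x\<in>carrier A. h (x \<otimes>\<^bsub>A\<^esub> a) = h x}"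

lemma (in group) subgroup_periods: "subgroup (periods G h) G"
proof
  show "\<one> \<in> periods G h"
    by (simp add: periods_def)
next
  fix a b assume a: "a \<in> periods G h" and b: "b \<in> periods G h"
  show "a \<otimes> b \<in> periods G h"
    using a b by (simp add: periods_def flip: m_assoc)
next
  fix a assume a: "a \<in> periods G h"
  have "h (x \<otimes> inv a) = h x" if "x \<in> carrier G" for x
  proof -
    have "h (x \<otimes> inv a) = h (x \<otimes> inv a \<otimes> a)"
      using a that by (simp add: periods_def)
    also have "\<dots> = h x"
      using a that by (simp add: periods_def m_assoc)
    finally show ?thesis .
  qed
  then show "inv a \<in> periods G h"
    using a by (simp add: periods_def)
qed (auto simp: periods_def)

lemma (in group) mult_inv_eq_one_iff:
  "x \<in> carrier G \<Longrightarrow> y \<in> carrier G \<Longrightarrow> x \<otimes> inv y = \<one> \<longleftrightarrow> x = y"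
  by (metis inv_equality inv_inv inv_closed r_inv)

lemma is_zero_map_delta_iff:
  assumes "group A" "group B" "h \<in> carrier A \<rightarrow> carrier B" "a \<in> carrier A"
  shows "is_zero_map A B (delta A B a h) \<longleftrightarrow> a \<in> periods A h"
proof -
  have "h (x \<otimes>\<^bsub>A\<^esub> a) \<otimes>\<^bsub>B\<^esub> inv\<^bsub>B\<^esub> h x = \<one>\<^bsub>B\<^esub> \<longleftrightarrow> h (x \<otimes>\<^bsub>A\<^esub> a) = h x"
    if "x \<in> carrier A" for x
    using assms that by (intro group.mult_inv_eq_one_iff) (auto simp: group.is_monoid monoid.m_closed)
  then show ?thesis
    using assms(4) by (auto simp: is_zero_map_def delta_def periods_def)
qed

lemma nonzero_delta_along_generator:
  assumes "group A" "group B" "h \<in> carrier A \<rightarrow> carrier B"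
    and "T \<subseteq> carrier A" "generate A T = carrier A"
    and "a \<in> carrier A" "\<not> is_zero_map A B (delta A B a h)"
  obtains t where "t \<in> T" "\<not> is_zero_map A B (delta A B t h)"
proof -
  interpret A: group A by fact
  have "\<not> T \<subseteq> periods A h"
  proof
    assume "T \<subseteq> periods A h"
    then have "carrier A \<subseteq> periods A h"
      using A.generate_subgroup_incl[OF _ A.subgroup_periods] assms(5) by metis
    then show False
      using assms(6,7) is_zero_map_delta_iff[OF assms(1-3,6)] by blast
  qed
  then obtain t where t: "t \<in> T" "t \<notin> periods A h"
    by blast
  then have "t \<in> carrier A"
    using assms(4) by blast
  then show thesis
    using that[OF t(1)] t(2) is_zero_map_delta_iff[OF assms(1-3)] by blast
qed

lemma nonzero_deltas_along_generators:
  assumes "comm_group A" "comm_group B" "h \<in> carrier A \<rightarrow> carrier B"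
    and "T \<subseteq> carrier A" "generate A T = carrier A"
    and "set as \<subseteq> carrier A" "\<not> is_zero_map A B (deltas A B as h)"
  shows "\<exists>ts. set ts \<subseteq> T \<and> length ts = length as \<and> \<not> is_zero_map A B (deltas A B ts h)"
  using assms(3,6,7)
proof (induction as arbitrary: h)
  case Nil
  then show ?case by auto
next
  case (Cons a as)
  have groups: "group A" "group B"
    using assms(1,2) by (simp_all add: comm_group.axioms(2))
  have a: "a \<in> carrier A" and as: "set as \<subseteq> carrier A"
    using Cons.prems(2) by auto
  have "\<not> is_zero_map A B (delta A B a (deltas A B as h))"
    using Cons.prems(3) by (simp add: deltas_Cons)
  then obtain t where t: "t \<in> T" "\<not> is_zero_map A B (delta A B t (deltas A B as h))"
    using nonzero_delta_along_generator[OF groups deltas_funcset[OF groups Cons.prems(1) as] assms(4,5) a]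
    by blast
  have tA: "t \<in> carrier A"
    using t(1) assms(4) by blast
  have "is_zero_map A B (deltas A B as (delta A B t h))
    \<longleftrightarrow> is_zero_map A B (delta A B t (deltas A B as h))"
    by (rule is_zero_map_cong) (rule deltas_delta_commute[OF assms(1,2) Cons.prems(1) tA as])
  then obtain ts where ts: "set ts \<subseteq> T" "length ts = length as"
    "\<not> is_zero_map A B (deltas A B ts (delta A B t h))"
    using Cons.IH[OF delta_funcset[OF groups Cons.prems(1) tA] as] t(2) by blast
  have "deltas A B (ts @ [t]) h = deltas A B ts (delta A B t h)"
    by (simp add: deltas_append deltas_Cons)
  then show ?case
    using ts t(1) by (intro exI[of _ "ts @ [t]"]) simp
qed

lemma is_zero_map_deltas_longer:
  assumes "group A" "group B"
    and "\<forall>as. set as \<subseteq> carrier A \<and> length as = n \<longrightarrow> is_zero_map A B (deltas A B as f)"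
    and "n \<le> length bs" "set bs \<subseteq> carrier A"
  shows "is_zero_map A B (deltas A B bs f)"
proof -
  define k where "k = length bs - n"
  have suffix: "is_zero_map A B (deltas A B (drop k bs) f)"
    using assms(3-5) set_drop_subset[of k bs] by (auto simp: k_def)
  have "is_zero_map A B (deltas A B (take k bs) (deltas A B (drop k bs) f))"
    using is_zero_map_deltas[OF assms(1,2) suffix, of "take k bs"] assms(5) set_take_subset[of k bs]
    by blast
  then show ?thesis
    by (simp flip: deltas_append)
qed

lemma fdeg_ge_iff:
  assumes "group A" "group B"
  shows "ereal (real d) \<le> fdeg A B f
    \<longleftrightarrow> (\<exists>as. set as \<subseteq> carrier A \<and> length as = d \<and> \<not> is_zero_map A B (deltas A B as f))"
proof -
  define vanish where "vanish n \<longleftrightarrow>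
    (\<forall>as. set as \<subseteq> carrier A \<and> length as = n \<longrightarrow> is_zero_map A B (deltas A B as f))" for n
  have rhs: "(\<exists>as. set as \<subseteq> carrier A \<and> length as = d \<and> \<not> is_zero_map A B (deltas A B as f))
    \<longleftrightarrow> \<not> vanish d"
    by (auto simp: vanish_def)
  have vanish_mono: "vanish n" if "vanish m" "m \<le> n" for m n
    using that is_zero_map_deltas_longer[OF assms] by (auto simp: vanish_def)
  have vanish_0: "vanish 0 \<longleftrightarrow> is_zero_map A B f"
    by (simp add: vanish_def)
  consider (zero) "is_zero_map A B f"
    | (finite) "\<not> is_zero_map A B f" "\<exists>n. vanish (Suc n)"
    | (infinite) "\<not> is_zero_map A B f" "\<nexists>n. vanish (Suc n)"
    by blast
  then show ?thesis
  proof cases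
    case zero
    then show ?thesis
      using vanish_0 vanish_mono[of 0 d] unfolding rhs fdeg_def by simp
  next
    case finite
    define m where "m = (LEAST n. vanish (Suc n))"
    have fdeg: "fdeg A B f = ereal (real m)"
      using finite unfolding fdeg_def m_def vanish_def by (simp only: if_False if_True)
    have "d \<le> m \<longleftrightarrow> \<not> vanish d"
    proof
      assume "d \<le> m"
      show "\<not> vanish d"
      proof (cases d)
        case (Suc k)
        then show ?thesis
          using \<open>d \<le> m\<close> Least_le[of "\<lambda>n. vanish (Suc n)" k] by (auto simp: m_def)
      qed (use finite vanish_0 in simp)
    next
      assume "\<not> vanish d"
      moreover have "vanish (Suc m)"
        unfolding m_def using finite(2) by (rule LeastI_ex)
      ultimately show "d \<le> m"
        using vanish_mono[of "Suc m" d] by linarith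
    qed
    then show ?thesis
      by (simp add: fdeg rhs)
  next
    case infinite
    then have "\<not> vanish d"
      using vanish_0 by (cases d) auto
    then show ?thesis
      using infinite unfolding rhs fdeg_def vanish_def by (simp only: if_False) simp
  qed
qed

lemma sum_inj_in_carrier:
  assumes "\<And>i. i \<in> I \<Longrightarrow> group (G i)" "k \<in> I" "a \<in> carrier (G k)"
  shows "sum_inj I G k a \<in> carrier (sum_group I G)"
proof -
  have "{i \<in> I. sum_inj I G k a i \<noteq> \<one>\<^bsub>G i\<^esub>} \<subseteq> {k}"
    by (auto simp: sum_inj_def)
  then show ?thesis
    using assms by (auto simp: carrier_sum_group sum_inj_def PiE_iff group.is_monoid monoid.one_closed
        intro: finite_subset)
qed

lemma sum_inj_hom:
  assumes "\<And>i. i \<in> I \<Longrightarrow> group (G i)" "k \<in> I"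
  shows "sum_inj I G k \<in> hom (G k) (sum_group I G)"
proof (rule homI)
  show "sum_inj I G k a \<in> carrier (sum_group I G)" if "a \<in> carrier (G k)" for a
    using sum_inj_in_carrier[of I G k, OF assms that] .
next
  fix a b assume "a \<in> carrier (G k)" "b \<in> carrier (G k)"
  then show "sum_inj I G k (a \<otimes>\<^bsub>G k\<^esub> b) = sum_inj I G k a \<otimes>\<^bsub>sum_group I G\<^esub> sum_inj I G k b"
    using assms by (auto simp: sum_inj_def group.is_monoid monoid.l_one intro!: restrict_ext)
qed

lemma sum_group_update_one:
  assumes "\<And>i. i \<in> I \<Longrightarrow> group (G i)" "y \<in> carrier (sum_group I G)" "k \<in> I"
  shows "y(k := \<one>\<^bsub>G k\<^esub>) \<in> carrier (sum_group I G)"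
    and "y = y(k := \<one>\<^bsub>G k\<^esub>) \<otimes>\<^bsub>sum_group I G\<^esub> sum_inj I G k (y k)"
proof -
  have y: "y \<in> (\<Pi>\<^sub>E i\<in>I. carrier (G i))" "finite {i \<in> I. y i \<noteq> \<one>\<^bsub>G i\<^esub>}"
    using assms by (auto simp: carrier_sum_group)
  have "{i \<in> I. (y(k := \<one>\<^bsub>G k\<^esub>)) i \<noteq> \<one>\<^bsub>G i\<^esub>} \<subseteq> {i \<in> I. y i \<noteq> \<one>\<^bsub>G i\<^esub>}"
    by auto
  then have "finite {i \<in> I. (y(k := \<one>\<^bsub>G k\<^esub>)) i \<noteq> \<one>\<^bsub>G i\<^esub>}"
    using y(2) by (rule finite_subset)
  moreover have "y(k := \<one>\<^bsub>G k\<^esub>) \<in> (\<Pi>\<^sub>E i\<in>I. carrier (G i))"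
    using y(1) assms by (auto simp: PiE_iff extensional_def group.is_monoid monoid.one_closed)
  ultimately show "y(k := \<one>\<^bsub>G k\<^esub>) \<in> carrier (sum_group I G)"
    by (subst carrier_sum_group) (use assms(1) in blast)+
  show "y = y(k := \<one>\<^bsub>G k\<^esub>) \<otimes>\<^bsub>sum_group I G\<^esub> sum_inj I G k (y k)"
  proof
    fix i
    show "y i = (y(k := \<one>\<^bsub>G k\<^esub>) \<otimes>\<^bsub>sum_group I G\<^esub> sum_inj I G k (y k)) i"
      using y assms by (cases "i \<in> I") (auto simp: sum_inj_def PiE_iff extensional_def
          group.is_monoid monoid.l_one monoid.r_one)
  qed
qed

lemma generate_sum_group:
  assumes "\<And>i. i \<in> I \<Longrightarrow> group (G i)"
    and "\<And>i. i \<in> I \<Longrightarrow> S i \<subseteq> carrier (G i)"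
    and "\<And>i. i \<in> I \<Longrightarrow> generate (G i) (S i) = carrier (G i)"
  shows "generate (sum_group I G) (\<Union>i\<in>I. sum_inj I G i ` S i) = carrier (sum_group I G)"
    (is "generate ?A ?T = _")
proof
  interpret A: group ?A
    using assms(1) by simp
  have "?T \<subseteq> carrier ?A"
    using assms(2) by (force intro: sum_inj_in_carrier[of I G, OF assms(1)])
  then show "generate ?A ?T \<subseteq> carrier ?A"
    by (rule A.generate_incl)
  have summand: "sum_inj I G k a \<in> generate ?A ?T" if "k \<in> I" "a \<in> carrier (G k)" for k a
  proof -
    interpret group_hom "G k" ?A "sum_inj I G k"
      using assms(1) sum_inj_hom[of I G k, OF assms(1) that(1)] that(1)
      by (simp add: group_hom_def group_hom_axioms_def)
    have "sum_inj I G k a \<in> generate ?A (sum_inj I G k ` S k)"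
      using generate_img[OF assms(2)[OF that(1)]] assms(3) that by auto
    also have "\<dots> \<subseteq> generate ?A ?T"
      using that(1) by (intro A.mono_generate) blast
    finally show ?thesis .
  qed
  have "y \<in> generate ?A ?T"
    if "finite F" "y \<in> carrier ?A" "{i \<in> I. y i \<noteq> \<one>\<^bsub>G i\<^esub>} \<subseteq> F" for F y
    using that
  proof (induction F arbitrary: y rule: finite_induct)
    case empty
    then have "y = \<one>\<^bsub>?A\<^esub>"
      using assms(1) by (auto simp: carrier_sum_group PiE_iff extensional_def)
    then show ?case
      by (simp only: generate.one)
  next
    case (insert k F)
    show ?case
    proof (cases "k \<in> I")
      case True
      have "y(k := \<one>\<^bsub>G k\<^esub>) \<in> generate ?A ?T"
        by (rule insert.IH[OF sum_group_update_one(1)[OF assms(1) insert.prems(1) True]])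
          (use insert.prems(2) in auto)
      moreover have "sum_inj I G k (y k) \<in> generate ?A ?T"
        using insert.prems(1) True assms(1) by (intro summand) (auto simp: carrier_sum_group)
      ultimately show ?thesis
        using sum_group_update_one(2)[OF assms(1) insert.prems(1) True] generate.eng by metis
    qed (use insert in blast)
  qed
  then show "carrier ?A \<subseteq> generate ?A ?T"
    using assms(1) by (auto simp: carrier_sum_group)
qed

lemma comm_group_sum_group:
  assumes "\<And>i. i \<in> I \<Longrightarrow> comm_group (G i)"
  shows "comm_group (sum_group I G)"
proof -
  have groups: "group (G i)" if "i \<in> I" for i
    using assms[OF that] by (rule comm_group.axioms(2))
  show ?thesis
  proof (rule group.group_comm_groupI)
    show "group (sum_group I G)"
      using groups by simp
  next
    fix x y assume "x \<in> carrier (sum_group I G)" "y \<in> carrier (sum_group I G)"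
    then have "x i \<otimes>\<^bsub>G i\<^esub> y i = y i \<otimes>\<^bsub>G i\<^esub> x i" if "i \<in> I" for i
      using that groups by (auto simp: carrier_sum_group PiE_iff intro: comm_monoid.m_comm[OF comm_group.axioms(1)[OF assms]])
    then show "x \<otimes>\<^bsub>sum_group I G\<^esub> y = y \<otimes>\<^bsub>sum_group I G\<^esub> x"
      by (auto intro: restrict_ext)
  qed
qed

lemma exists_blocks_iff:
  "(\<exists>(r::nat) (\<gamma>s::nat \<Rightarrow> 'i) (ds::nat \<Rightarrow> nat) (a::nat \<Rightarrow> nat \<Rightarrow> 'a).
      (\<forall>i<r. \<gamma>s i \<in> \<Gamma> \<and> ds i > 0 \<and> (\<forall>j<ds i. a i j \<in> S (\<gamma>s i)))
      \<and> (\<Sum>i<r. ds i) = d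
      \<and> P (concat (map (\<lambda>i. map (\<lambda>j. e (\<gamma>s i) (a i j)) [0..<ds i]) [0..<r])))
   \<longleftrightarrow> (\<exists>ts. set ts \<subseteq> (\<Union>\<gamma>\<in>\<Gamma>. e \<gamma> ` S \<gamma>) \<and> length ts = d \<and> P ts)"
proof
  assume "\<exists>r \<gamma>s ds a. (\<forall>i<r. \<gamma>s i \<in> \<Gamma> \<and> ds i > 0 \<and> (\<forall>j<ds i. a i j \<in> S (\<gamma>s i)))
      \<and> (\<Sum>i<r. ds i) = d
      \<and> P (concat (map (\<lambda>i. map (\<lambda>j. e (\<gamma>s i) (a i j)) [0..<ds i]) [0..<r]))"
  then obtain r \<gamma>s ds a where blocks: "\<forall>i<r. \<gamma>s i \<in> \<Gamma> \<and> (\<forall>j<ds i. a i j \<in> S (\<gamma>s i))"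
    and "(\<Sum>i<r. ds i) = d" "P (concat (map (\<lambda>i. map (\<lambda>j. e (\<gamma>s i) (a i j)) [0..<ds i]) [0..<r]))"
    by blast
  moreover have "length (concat (map (\<lambda>i. map (\<lambda>j. e (\<gamma>s i) (a i j)) [0..<ds i]) [0..<r]))
    = (\<Sum>i<r. ds i)"
    by (simp add: length_concat comp_def sum_list_distinct_conv_sum_set lessThan_atLeast0)
  moreover have "set (concat (map (\<lambda>i. map (\<lambda>j. e (\<gamma>s i) (a i j)) [0..<ds i]) [0..<r]))
    \<subseteq> (\<Union>\<gamma>\<in>\<Gamma>. e \<gamma> ` S \<gamma>)"
    using blocks by fastforce
  ultimately show "\<exists>ts. set ts \<subseteq> (\<Union>\<gamma>\<in>\<Gamma>. e \<gamma> ` S \<gamma>) \<and> length ts = d \<and> P ts"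
    by blast
next
  assume "\<exists>ts. set ts \<subseteq> (\<Union>\<gamma>\<in>\<Gamma>. e \<gamma> ` S \<gamma>) \<and> length ts = d \<and> P ts"
  then obtain ts where ts: "set ts \<subseteq> (\<Union>\<gamma>\<in>\<Gamma>. e \<gamma> ` S \<gamma>)" "length ts = d" "P ts"
    by blast
  then have "\<forall>i<d. \<exists>\<gamma> s. \<gamma> \<in> \<Gamma> \<and> s \<in> S \<gamma> \<and> ts ! i = e \<gamma> s"
    by (metis (no_types, lifting) UN_E imageE nth_mem subsetD)
  then obtain \<gamma>s a where ga: "\<forall>i<d. \<gamma>s i \<in> \<Gamma> \<and> a i \<in> S (\<gamma>s i) \<and> ts ! i = e (\<gamma>s i) (a i)"
    by metis
  have "concat (map (\<lambda>i. map (\<lambda>j. e (\<gamma>s i) (a i)) [0..<1]) [0..<d]) = ts"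
    using ga ts(2) by (intro nth_equalityI) (auto simp: concat_map_singleton)
  then show "\<exists>r \<gamma>s ds a. (\<forall>i<r. \<gamma>s i \<in> \<Gamma> \<and> ds i > 0 \<and> (\<forall>j<ds i. a i j \<in> S (\<gamma>s i)))
      \<and> (\<Sum>i<r. ds i) = d
      \<and> P (concat (map (\<lambda>i. map (\<lambda>j. e (\<gamma>s i) (a i j)) [0..<ds i]) [0..<r]))"
    using ga ts(3) by (intro exI[of _ d] exI[of _ \<gamma>s] exI[of _ "\<lambda>_. 1"] exI[of _ "\<lambda>i j. a i"]) auto
qed

theorem lemma3:
  fixes \<Gamma> :: "'i set"
    and G :: "'i \<Rightarrow> ('a,'c) monoid_scheme"
    and S :: "'i \<Rightarrow> 'a set"
    and B :: "('b,'d) monoid_scheme"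
    and f :: "('i \<Rightarrow> 'a) \<Rightarrow> 'b"
    and d :: nat
  assumes "\<Gamma> \<noteq> {}"
    and "\<And>\<gamma>. \<gamma> \<in> \<Gamma> \<Longrightarrow> comm_group (G \<gamma>)"
    and "\<And>\<gamma>. \<gamma> \<in> \<Gamma> \<Longrightarrow> carrier (G \<gamma>) \<noteq> {\<one>\<^bsub>G \<gamma>\<^esub>}"
    and "\<And>\<gamma>. \<gamma> \<in> \<Gamma> \<Longrightarrow> S \<gamma> \<subseteq> carrier (G \<gamma>)"
    and "\<And>\<gamma>. \<gamma> \<in> \<Gamma> \<Longrightarrow> generate (G \<gamma>) (S \<gamma>) = carrier (G \<gamma>)"
    and "comm_group B"
    and "f \<in> carrier (sum_group \<Gamma> G) \<rightarrow> carrier B"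
  shows "(\<exists>(r::nat) (\<gamma>s::nat \<Rightarrow> 'i) (ds::nat \<Rightarrow> nat) (a::nat \<Rightarrow> nat \<Rightarrow> 'a).
            (\<forall>i<r. \<gamma>s i \<in> \<Gamma> \<and> ds i > 0 \<and> (\<forall>j<ds i. a i j \<in> S (\<gamma>s i)))
          \<and> (\<Sum>i<r. ds i) = d
          \<and> \<not> is_zero_map (sum_group \<Gamma> G) B
                (deltas (sum_group \<Gamma> G) B
                   (concat (map (\<lambda>i. map (\<lambda>j. sum_inj \<Gamma> G (\<gamma>s i) (a i j)) [0..<ds i]) [0..<r])) f))
     \<longleftrightarrow> fdeg (sum_group \<Gamma> G) B f \<ge> ereal (real d)"
proof -
  let ?A = "sum_group \<Gamma> G"
  let ?T = "\<Union>\<gamma>\<in>\<Gamma>. sum_inj \<Gamma> G \<gamma> ` S \<gamma>"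
  have groups: "group (G \<gamma>)" if "\<gamma> \<in> \<Gamma>" for \<gamma>
    using assms(2)[OF that] by (rule comm_group.axioms(2))
  have cA: "comm_group ?A"
    using assms(2) by (rule comm_group_sum_group)
  have gA: "group ?A" and gB: "group B"
    using cA assms(6) by (simp_all add: comm_group.axioms(2))
  have T: "?T \<subseteq> carrier ?A"
    using assms(4) by (force intro: sum_inj_in_carrier[of \<Gamma> G, OF groups])
  have gen: "generate ?A ?T = carrier ?A"
    using groups assms(4,5) by (rule generate_sum_group)
  have "(\<exists>ts. set ts \<subseteq> ?T \<and> length ts = d \<and> \<not> is_zero_map ?A B (deltas ?A B ts f))
    \<longleftrightarrow> (\<exists>as. set as \<subseteq> carrier ?A \<and> length as = d \<and> \<not> is_zero_map ?A B (deltas ?A B as f))"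
    using T nonzero_deltas_along_generators[OF cA assms(6,7) T gen] by blast
  then show ?thesis
    by (simp only: exists_blocks_iff[where P = "\<lambda>ts. \<not> is_zero_map ?A B (deltas ?A B ts f)"]
        fdeg_ge_iff[OF gA gB])
qed

end
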